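(* For fixed $K$, the exact coverage probabilities are non-increasing in the serving index: $P^{k}_{\mathrm{cov,mf}}(K)\ge P^{k+1}_{\mathrm{cov,mf}}(K)$ and $P^{k}_{\mathrm{cov,zf}}(K)\ge P^{k+1}_{\mathrm{cov,zf}}(K)$ for all $1\le k\le K-1$.
   Context: Let $\Phi_b$ be a homogeneous Poisson point process on $\mathbb{R}^2$ with intensity $\lambda_b>0$; order its points by distance to the origin as $\mathbf d_1,\mathbf d_2,\dots$ with distances $r_1<r_2<\cdots$. Fix integers $K\ge2$, $\alpha>2$, $\gamma>0$, $L\ge1$ (for ZF, $L\ge K$). MF: the typical user at the origin is served by $\mathbf d_k$, desired gain $\sim\Gamma(L,1)$, every other SBS contributes an independent $\mathrm{Exp}(1)$ gain; $\mathrm{SIR}_{k,\mathrm{mf}}=g_k r_k^{-\alpha}/\sum_{j\ne k}g_j r_j^{-\alpha}$. ZF: served by $\mathbf d_k$, desired gain $\sim\Gamma(L-K+1,1)$, only SBSs $\mathbf d_j$ with $j>K$ interfere with independent $\mathrm{Exp}(1)$ gains; $\mathrm{SIR}_{k,\mathrm{zf}}=g_k r_k^{-\alpha}/\sum_{j>K}g_j r_j^{-\alpha}$. All gains independent of each other and of $\Phi_b$. $P^{k}_{\mathrm{cov,mf}}(K)=\mathbb{P}[\mathrm{SIR}_{k,\mathrm{mf}}\ge\gamma]$, $P^{k}_{\mathrm{cov,zf}}(K)=\mathbb{P}[\mathrm{SIR}_{k,\mathrm{zf}}\ge\gamma]$. *)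

theory Defs
  imports "HOL-Probability.Probability"
begin

text \<open>Points of the process are indexed from 1: d 1, d 2, ... ordered by distance
  to the origin (d 0 is an unused dummy). Gains: g 0 is the gain of the desired
  (serving) link, g j (j >= 1) is the fading gain of SBS d j towards the typical user.\<close>

definition ppp_count :: "(nat \<Rightarrow> 'w \<Rightarrow> real^2) \<Rightarrow> (real^2) set \<Rightarrow> 'w \<Rightarrow> nat" where
  "ppp_count d A w = card {j. 1 \<le> j \<and> d j w \<in> A}"

definition ordered_hppp :: "'w measure \<Rightarrow> real \<Rightarrow> (nat \<Rightarrow> 'w \<Rightarrow> real^2) \<Rightarrow> bool" where
  "ordered_hppp M lam d \<longleftrightarrow>
     (\<forall>j. d j \<in> borel_measurable M) \<and>
     (AE w in M. (\<forall>j\<ge>1. norm (d j w) < norm (d (Suc j) w)) \<and>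
                 filterlim (\<lambda>j. norm (d j w)) at_top sequentially) \<and>
     (\<forall>A. A \<in> sets borel \<and> bounded A \<longrightarrow>
          (\<forall>n. measure M {w \<in> space M. ppp_count d A w = n} =
               exp (- lam * measure lborel A) * (lam * measure lborel A) ^ n / fact n)) \<and>
     (\<forall>(As :: nat \<Rightarrow> (real^2) set) n.
          (\<forall>i<n. As i \<in> sets borel \<and> bounded (As i)) \<and> disjoint_family_on As {..<n} \<longrightarrow>
          prob_space.indep_vars M (\<lambda>_. count_space UNIV) (\<lambda>i. ppp_count d (As i)) {..<n})"

definition gains_setup :: "'w measure \<Rightarrow> (nat \<Rightarrow> 'w \<Rightarrow> real^2) \<Rightarrow> (nat \<Rightarrow> 'w \<Rightarrow> real)
     \<Rightarrow> (real \<Rightarrow> real) \<Rightarrow> bool" where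
  "gains_setup M d g D \<longleftrightarrow>
     distributed M lborel (g 0) (\<lambda>x. ennreal (D x)) \<and>
     (\<forall>j\<ge>1. distributed M lborel (g j) (\<lambda>x. ennreal (exponential_density 1 x))) \<and>
     prob_space.indep_vars M (\<lambda>_. borel) g UNIV \<and>
     (\<lambda>w j. d j w) \<in> measurable M (Pi\<^sub>M UNIV (\<lambda>_. borel)) \<and>
     (\<lambda>w j. g j w) \<in> measurable M (Pi\<^sub>M UNIV (\<lambda>_. borel)) \<and>
     prob_space.indep_set M
       (sets (vimage_algebra (space M) (\<lambda>w j. d j w) (Pi\<^sub>M UNIV (\<lambda>_. borel))))
       (sets (vimage_algebra (space M) (\<lambda>w j. g j w) (Pi\<^sub>M UNIV (\<lambda>_. borel))))"

definition sir_mf :: "real \<Rightarrow> (nat \<Rightarrow> 'w \<Rightarrow> real^2) \<Rightarrow> (nat \<Rightarrow> 'w \<Rightarrow> real) \<Rightarrow> nat \<Rightarrow> 'w \<Rightarrow> real" where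
  "sir_mf \<alpha> d g k w =
     g 0 w * norm (d k w) powr (-\<alpha>) /
     infsum (\<lambda>j. g j w * norm (d j w) powr (-\<alpha>)) ({1..} - {k})"

definition sir_zf :: "real \<Rightarrow> nat \<Rightarrow> (nat \<Rightarrow> 'w \<Rightarrow> real^2) \<Rightarrow> (nat \<Rightarrow> 'w \<Rightarrow> real) \<Rightarrow> nat \<Rightarrow> 'w \<Rightarrow> real" where
  "sir_zf \<alpha> K d g k w =
     g 0 w * norm (d k w) powr (-\<alpha>) /
     infsum (\<lambda>j. g j w * norm (d j w) powr (-\<alpha>)) {K<..}"

definition pcov_mf :: "'w measure \<Rightarrow> real \<Rightarrow> real \<Rightarrow> (nat \<Rightarrow> 'w \<Rightarrow> real^2) \<Rightarrow> (nat \<Rightarrow> 'w \<Rightarrow> real) \<Rightarrow> nat \<Rightarrow> real" where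
  "pcov_mf M \<alpha> \<gamma> d g k = measure M {w \<in> space M. sir_mf \<alpha> d g k w \<ge> \<gamma>}"

definition pcov_zf :: "'w measure \<Rightarrow> real \<Rightarrow> real \<Rightarrow> nat \<Rightarrow> (nat \<Rightarrow> 'w \<Rightarrow> real^2) \<Rightarrow> (nat \<Rightarrow> 'w \<Rightarrow> real) \<Rightarrow> nat \<Rightarrow> real" where
  "pcov_zf M \<alpha> \<gamma> K d g k = measure M {w \<in> space M. sir_zf \<alpha> K d g k w \<ge> \<gamma>}"

end

theory Submission
  imports Defs "HOL-Combinatorics.Transposition"
begin

text \<open>Serving from the \<open>(k+1)\<close>-th nearest station instead of the \<open>k\<close>-th weakens the desired
  signal. Under ZF the interferer set \<open>{K<..}\<close> does not depend on the serving index, so the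
  SIR drops pointwise. Under MF the \<open>k\<close>-th station becomes an interferer in place of the
  \<open>(k+1)\<close>-th; since the interferer gains are i.i.d. and independent of the positions,
  exchanging the gains of these two stations preserves the joint law, and after the exchange
  the farther interferer is replaced by the nearer one with the same gain, so the SIR event for
  \<open>k+1\<close> is almost surely contained in that for \<open>k\<close>.\<close>

lemma infsum_nat_eq_suminf_indicator:
  fixes f :: "nat \<Rightarrow> real"
  shows "infsum f A = (if summable (\<lambda>n. \<bar>indicator A n * f n\<bar>)
                       then suminf (\<lambda>n. indicator A n * f n) else 0)"
proof -
  define g where "g n = indicator A n * f n" for n
  have "infsum f A = infsum g UNIV"
    unfolding g_def by (rule infsum_cong_neutral) (auto simp: indicator_def)
  moreover have "(g has_sum suminf g) UNIV" if "summable (\<lambda>n. \<bar>g n\<bar>)"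
    using that by (intro norm_summable_imp_has_sum) (auto intro: summable_sums summable_rabs_cancel)
  moreover have "\<not> g summable_on UNIV" if "\<not> summable (\<lambda>n. \<bar>g n\<bar>)"
    using that summable_on_iff_abs_summable_on_real[of g UNIV]
      summable_on_UNIV_nonneg_real_iff[of "\<lambda>n. norm (g n)"] by auto
  ultimately show ?thesis
    unfolding g_def[symmetric] by (metis infsumI infsum_not_exists)
qed

lemma borel_measurable_infsum_nat[measurable (raw)]:
  fixes h :: "nat \<Rightarrow> 'a \<Rightarrow> real"
  assumes [measurable]: "\<And>n. h n \<in> borel_measurable M"
  shows "(\<lambda>w. infsum (\<lambda>n. h n w) A) \<in> borel_measurable M"
proof -
  have "{w\<in>space M. summable (\<lambda>n. \<bar>indicator A n * h n w\<bar>)} =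
    {w\<in>space M. Cauchy (\<lambda>i. \<Sum>n<i. \<bar>indicator A n * h n w\<bar>)}"
    by (simp add: summable_iff_convergent Cauchy_convergent_iff)
  also have "\<dots> \<in> sets M" by (rule sets_Collect_Cauchy) measurable
  finally have [measurable]: "Measurable.pred M (\<lambda>w. summable (\<lambda>n. \<bar>indicator A n * h n w\<bar>))"
    unfolding pred_def by simp
  show ?thesis unfolding infsum_nat_eq_suminf_indicator by measurable
qed

definition sir_seq :: "real \<Rightarrow> nat set \<Rightarrow> nat \<Rightarrow> (nat \<Rightarrow> real^2) \<Rightarrow> (nat \<Rightarrow> real) \<Rightarrow> real" where
  "sir_seq \<alpha> I k x y = y 0 * norm (x k) powr (-\<alpha>) / (\<Sum>\<^sub>\<infinity>j\<in>I. y j * norm (x j) powr (-\<alpha>))"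

lemma sir_mf_eq_sir_seq:
  "sir_mf \<alpha> d g k w = sir_seq \<alpha> ({1..} - {k}) k (\<lambda>j. d j w) (\<lambda>j. g j w)"
  by (simp add: sir_mf_def sir_seq_def)

lemma sir_zf_eq_sir_seq:
  "sir_zf \<alpha> K d g k w = sir_seq \<alpha> {K<..} k (\<lambda>j. d j w) (\<lambda>j. g j w)"
  by (simp add: sir_zf_def sir_seq_def)

lemma measurable_sir_seq_ge:
  "{p \<in> space (Pi\<^sub>M UNIV (\<lambda>_. borel) \<Otimes>\<^sub>M Pi\<^sub>M UNIV (\<lambda>_. borel)). \<gamma> \<le> sir_seq \<alpha> I k (fst p) (snd p)}
     \<in> sets (Pi\<^sub>M UNIV (\<lambda>_. borel) \<Otimes>\<^sub>M Pi\<^sub>M UNIV (\<lambda>_. borel))"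
  unfolding sir_seq_def by measurable

lemma divide_exchange_le:
  fixes a b c y S :: real
  assumes "0 \<le> c" "0 \<le> y" "0 \<le> S" "0 \<le> b" "b \<le> a"
  shows "c * b / (y * a + S) \<le> c * a / (y * b + S)"
proof (cases "y * b + S = 0")
  case True
  then have "c * b = 0 \<or> y * a + S = 0"
    using assms by (auto simp: add_nonneg_eq_0_iff zero_le_mult_iff)
  then show ?thesis using True by auto
next
  case False
  moreover have "0 \<le> y * b + S" using assms by simp
  ultimately have pos: "0 < y * b + S" by simp
  have "y * b + S \<le> y * a + S" using assms by (simp add: mult_left_mono)
  then have "c * b / (y * a + S) \<le> c * b / (y * b + S)"
    using assms pos by (intro divide_left_mono) auto
  also have "\<dots> \<le> c * a / (y * b + S)"
    using assms pos by (intro divide_right_mono mult_left_mono) auto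
  finally show ?thesis .
qed

text \<open>The two interference sums are \<open>y (k+1) * a k + S\<close> and \<open>y (k+1) * a (k+1) + S\<close> over the
  common remainder \<open>S\<close>; if that remainder is not summable, both infinite sums are \<open>0\<close>.\<close>
lemma ratio_transpose_le:
  fixes a y :: "nat \<Rightarrow> real"
  assumes k: "1 \<le> k" and a: "\<And>j. 0 \<le> a j" "a (Suc k) \<le> a k" and y: "\<And>j. 0 \<le> y j"
  shows "y 0 * a (Suc k) / (\<Sum>\<^sub>\<infinity>j\<in>{1..} - {Suc k}. y (Transposition.transpose k (Suc k) j) * a j)
         \<le> y 0 * a k / (\<Sum>\<^sub>\<infinity>j\<in>{1..} - {k}. y j * a j)"
proof -
  define R where "R = {1..} - {k, Suc k}"
  let ?h = "\<lambda>j. y j * a j" and ?h' = "\<lambda>j. y (Transposition.transpose k (Suc k) j) * a j"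
  have sets: "{1..} - {k} = insert (Suc k) R" "{1..} - {Suc k} = insert k R"
    "Suc k \<notin> R" "k \<notin> R"
    using k by (auto simp: R_def)
  have on_R: "?h' j = ?h j" if "j \<in> R" for j
    using that by (auto simp: R_def)
  have t0: "Transposition.transpose k (Suc k) 0 = 0" using k by simp
  show ?thesis
  proof (cases "?h summable_on R")
    case True
    define S where "S = (\<Sum>\<^sub>\<infinity>j\<in>R. ?h j)"
    have "0 \<le> S" unfolding S_def using a y by (intro infsum_nonneg) simp
    moreover have "(\<Sum>\<^sub>\<infinity>j\<in>{1..} - {k}. ?h j) = y (Suc k) * a (Suc k) + S"
      unfolding sets S_def using True sets by (simp add: infsum_insert)
    moreover have "(\<Sum>\<^sub>\<infinity>j\<in>{1..} - {Suc k}. ?h' j) = y (Suc k) * a k + S"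
    proof -
      have "?h' summable_on R" using True on_R summable_on_cong[of R ?h' ?h] by blast
      moreover have "(\<Sum>\<^sub>\<infinity>j\<in>R. ?h' j) = S" unfolding S_def by (rule infsum_cong) (rule on_R)
      ultimately show ?thesis using sets by (simp add: infsum_insert)
    qed
    ultimately show ?thesis
      using a y t0 by (simp add: divide_exchange_le)
  next
    case False
    then have "\<not> ?h' summable_on R" using on_R summable_on_cong[of R ?h' ?h] by blast
    then show ?thesis
      using False sets by (simp add: summable_on_insert_iff infsum_not_exists)
  qed
qed

lemma sir_seq_transpose_le:
  assumes k: "1 \<le> k" and "0 < \<alpha>" and "0 < norm (x k)" "norm (x k) \<le> norm (x (Suc k))"
    and y: "\<And>j. 0 \<le> y j"
  shows "sir_seq \<alpha> ({1..} - {Suc k}) (Suc k) x (\<lambda>j. y (Transposition.transpose k (Suc k) j))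
         \<le> sir_seq \<alpha> ({1..} - {k}) k x y"
proof -
  have "norm (x (Suc k)) powr (-\<alpha>) \<le> norm (x k) powr (-\<alpha>)"
    using assms by (intro powr_mono2') auto
  then show ?thesis
    using ratio_transpose_le[OF k _ _ y, of "\<lambda>j. norm (x j) powr (-\<alpha>)"] k
    by (simp add: sir_seq_def)
qed

lemma sir_seq_Suc_le:
  assumes "0 < \<alpha>" and "0 < norm (x k)" "norm (x k) \<le> norm (x (Suc k))"
    and y: "\<And>j. 0 \<le> y j"
  shows "sir_seq \<alpha> I (Suc k) x y \<le> sir_seq \<alpha> I k x y"
proof -
  have "norm (x (Suc k)) powr (-\<alpha>) \<le> norm (x k) powr (-\<alpha>)"
    using assms by (intro powr_mono2') auto
  moreover have "0 \<le> (\<Sum>\<^sub>\<infinity>j\<in>I. y j * norm (x j) powr (-\<alpha>))"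
    using y by (intro infsum_nonneg) simp
  ultimately show ?thesis
    unfolding sir_seq_def using y by (intro divide_right_mono mult_left_mono) auto
qed

lemma (in prob_space) prob_Collect_eq_if_distr_eq:
  assumes X: "X \<in> measurable M N" and Y: "Y \<in> measurable M N"
    and XY: "distr M N X = distr M N Y" and P: "{x \<in> space N. P x} \<in> sets N"
  shows "prob {w \<in> space M. P (X w)} = prob {w \<in> space M. P (Y w)}"
proof -
  have "{w \<in> space M. P (Z w)} = Z -` {x \<in> space N. P x} \<inter> space M"
    if "Z \<in> measurable M N" for Z
    using measurable_space[OF that] by auto
  then show ?thesis
    using measure_distr[OF X P] measure_distr[OF Y P] X Y XY by simp
qed

lemma (in prob_space) indep_set_mono:
  "indep_set A B \<Longrightarrow> A' \<subseteq> A \<Longrightarrow> B' \<subseteq> B \<Longrightarrow> indep_set A' B'"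
  unfolding indep_set_def by (rule indep_sets_mono_sets) (auto split: bool.split)

lemma (in prob_space) indep_set_vimage_algebra_compose:
  assumes "indep_set A (sets (vimage_algebra (space M) Y T))"
    and "Y \<in> measurable M T" and "f \<in> measurable T T'"
  shows "indep_set A (sets (vimage_algebra (space M) (\<lambda>w. f (Y w)) T'))"
proof (rule indep_set_mono[OF assms(1) order_refl])
  have "Y \<in> measurable (vimage_algebra (space M) Y T) T"
    using measurable_space[OF assms(2)] by (intro measurable_vimage_algebra1) auto
  then show "sets (vimage_algebra (space M) (\<lambda>w. f (Y w)) T') \<subseteq> sets (vimage_algebra (space M) Y T)"
    using assms(3) by (intro sets_image_in_sets) auto
qed

lemma (in prob_space) distr_pair_eq_pair_measure:
  assumes X: "X \<in> measurable M S" and Y: "Y \<in> measurable M T"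
    and ind: "indep_set (sets (vimage_algebra (space M) X S)) (sets (vimage_algebra (space M) Y T))"
  shows "distr M (S \<Otimes>\<^sub>M T) (\<lambda>w. (X w, Y w)) = distr M S X \<Otimes>\<^sub>M distr M T Y"
proof (rule pair_measure_eqI[symmetric])
  show "sigma_finite_measure (distr M S X)" "sigma_finite_measure (distr M T Y)"
    using prob_space_distr[OF X] prob_space_distr[OF Y] by (simp_all add: prob_space_imp_sigma_finite)
  show "sets (distr M S X \<Otimes>\<^sub>M distr M T Y) = sets (distr M (S \<Otimes>\<^sub>M T) (\<lambda>w. (X w, Y w)))"
    by (simp cong: sets_pair_measure_cong)
  fix A B assume A: "A \<in> sets (distr M S X)" and B: "B \<in> sets (distr M T Y)"
  have XY: "(\<lambda>w. (X w, Y w)) \<in> measurable M (S \<Otimes>\<^sub>M T)" using X Y by measurable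
  have "(\<lambda>w. (X w, Y w)) -` (A \<times> B) \<inter> space M = (X -` A \<inter> space M) \<inter> (Y -` B \<inter> space M)"
    by auto
  moreover have "prob ((X -` A \<inter> space M) \<inter> (Y -` B \<inter> space M))
      = prob (X -` A \<inter> space M) * prob (Y -` B \<inter> space M)"
    using A B by (intro indep_setD[OF ind] in_vimage_algebra) auto
  ultimately show "emeasure (distr M S X) A * emeasure (distr M T Y) B
      = emeasure (distr M (S \<Otimes>\<^sub>M T) (\<lambda>w. (X w, Y w))) (A \<times> B)"
    using A B X Y XY by (simp add: emeasure_distr emeasure_eq_measure ennreal_mult'')
qed

lemma (in prob_space) distr_reindex_eq_if_indep_vars:
  assumes ind: "indep_vars (\<lambda>_. N) Y UNIV" and inj: "inj \<pi>"
    and same: "\<And>i. distr M N (Y (\<pi> i)) = distr M N (Y i)"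
  shows "distr M (\<Pi>\<^sub>M i\<in>UNIV. N) (\<lambda>w i. Y (\<pi> i) w) = distr M (\<Pi>\<^sub>M i\<in>UNIV. N) (\<lambda>w i. Y i w)"
proof -
  let ?P = "\<Pi>\<^sub>M i\<in>UNIV. N" and ?N = "\<lambda>i. distr M N (Y i)"
  have rv: "random_variable N (Y i)" for i
    using ind by (simp add: indep_vars_def2)
  have law: "distr M ?P (\<lambda>w i. Y i w) = (\<Pi>\<^sub>M i\<in>UNIV. ?N i)"
    using ind rv indep_vars_iff_distr_eq_PiM[where I=UNIV and M'="\<lambda>_. N" and X=Y] by (simp add: restrict_UNIV)
  have reindex: "(\<lambda>y i. y (\<pi> i)) \<in> measurable ?P ?P"
    by (rule measurable_PiM_single') (auto simp: space_PiM)
  have Ymeas: "(\<lambda>w i. Y i w) \<in> measurable M ?P"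
    using rv by (intro measurable_PiM_single') (auto dest: measurable_space)
  have "distr M ?P (\<lambda>w i. Y (\<pi> i) w) = distr (distr M ?P (\<lambda>w i. Y i w)) ?P (\<lambda>y i. y (\<pi> i))"
    by (subst distr_distr[OF reindex Ymeas]) (simp add: comp_def)
  also have "\<dots> = distr (\<Pi>\<^sub>M i\<in>UNIV. ?N i) (\<Pi>\<^sub>M i\<in>UNIV. ?N (\<pi> i)) (\<lambda>y. \<lambda>i\<in>UNIV. y (\<pi> i))"
    unfolding law by (rule distr_cong) (auto intro!: sets_PiM_cong simp: restrict_UNIV)
  also have "\<dots> = (\<Pi>\<^sub>M i\<in>UNIV. ?N (\<pi> i))"
    using inj by (intro distr_PiM_reindex prob_space_distr rv) auto
  finally show ?thesis
    using law same by simp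
qed

lemma (in prob_space) gains_setup_measurable:
  assumes "gains_setup M d g D"
  shows "d j \<in> borel_measurable M" "g j \<in> borel_measurable M"
    and "(\<lambda>w. (\<lambda>j. d j w, \<lambda>j. g j w))
           \<in> measurable M (Pi\<^sub>M UNIV (\<lambda>_. borel) \<Otimes>\<^sub>M Pi\<^sub>M UNIV (\<lambda>_. borel))"
proof -
  have D: "(\<lambda>w j. d j w) \<in> measurable M (Pi\<^sub>M UNIV (\<lambda>_. borel))"
    and G: "(\<lambda>w j. g j w) \<in> measurable M (Pi\<^sub>M UNIV (\<lambda>_. borel))"
    using assms by (simp_all add: gains_setup_def)
  show "d j \<in> borel_measurable M" "g j \<in> borel_measurable M"
    using measurable_compose[OF D measurable_component_singleton[of j UNIV]]
      measurable_compose[OF G measurable_component_singleton[of j UNIV]] by simp_all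
  show "(\<lambda>w. (\<lambda>j. d j w, \<lambda>j. g j w)) \<in> measurable M (Pi\<^sub>M UNIV (\<lambda>_. borel) \<Otimes>\<^sub>M Pi\<^sub>M UNIV (\<lambda>_. borel))"
    using D G by (rule measurable_Pair)
qed

lemma (in prob_space) gains_setup_AE_nonneg:
  assumes gs: "gains_setup M d g D" and D: "\<And>x. x < 0 \<Longrightarrow> D x = 0"
  shows "AE w in M. \<forall>j. 0 \<le> g j w"
proof -
  have "AE w in M. 0 \<le> X w" if X: "distributed M lborel X (\<lambda>x. ennreal (f x))"
    and f: "\<And>x. x < 0 \<Longrightarrow> f x = 0" for X :: "'a \<Rightarrow> real" and f
  proof -
    have "AE x in lborel. 0 < f x \<longrightarrow> 0 \<le> x"
      using f by (intro AE_I2) (metis less_irrefl not_le)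
    then show ?thesis using distributed_AE2[OF X, of "\<lambda>x. 0 \<le> x"] by simp
  qed
  note nonneg = this
  have "AE w in M. 0 \<le> g j w" for j
  proof (cases "j = 0")
    case True
    then show ?thesis using gs D by (auto intro: nonneg simp: gains_setup_def)
  next
    case False
    then have "distributed M lborel (g j) (\<lambda>x. ennreal (exponential_density 1 x))"
      using gs by (simp add: gains_setup_def)
    then show ?thesis by (rule nonneg) (simp add: exponential_density_def)
  qed
  then show ?thesis by (simp add: AE_all_countable)
qed

lemma (in prob_space) gains_setup_distr_transpose:
  assumes gs: "gains_setup M d g D" and k: "1 \<le> k"
  shows "distr M (Pi\<^sub>M UNIV (\<lambda>_. borel) \<Otimes>\<^sub>M Pi\<^sub>M UNIV (\<lambda>_. borel))
           (\<lambda>w. (\<lambda>j. d j w, \<lambda>j. g (Transposition.transpose k (Suc k) j) w))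
       = distr M (Pi\<^sub>M UNIV (\<lambda>_. borel) \<Otimes>\<^sub>M Pi\<^sub>M UNIV (\<lambda>_. borel))
           (\<lambda>w. (\<lambda>j. d j w, \<lambda>j. g j w))"
proof -
  let ?\<pi> = "Transposition.transpose k (Suc k)"
  let ?D = "Pi\<^sub>M UNIV (\<lambda>_. borel) :: (nat \<Rightarrow> real^2) measure"
  let ?P = "Pi\<^sub>M UNIV (\<lambda>_. borel) :: (nat \<Rightarrow> real) measure"
  have D: "(\<lambda>w j. d j w) \<in> measurable M ?D" and G: "(\<lambda>w j. g j w) \<in> measurable M ?P"
    and ind: "indep_set (sets (vimage_algebra (space M) (\<lambda>w j. d j w) ?D))
                        (sets (vimage_algebra (space M) (\<lambda>w j. g j w) ?P))"
    using gs by (simp_all add: gains_setup_def)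
  have reindex: "(\<lambda>y j. y (?\<pi> j)) \<in> measurable ?P ?P"
    by (rule measurable_PiM_single') (auto simp: space_PiM)
  have G': "(\<lambda>w j. g (?\<pi> j) w) \<in> measurable M ?P"
    using measurable_compose[OF G reindex] by simp
  have "distr M ?P (\<lambda>w j. g (?\<pi> j) w) = distr M ?P (\<lambda>w j. g j w)"
  proof (rule distr_reindex_eq_if_indep_vars)
    show "indep_vars (\<lambda>_. borel) g UNIV" using gs by (simp add: gains_setup_def)
    show "inj ?\<pi>" by (rule inj_transpose)
    have "distr M borel (g j) = density lborel (\<lambda>x. ennreal (exponential_density 1 x))"
      if "1 \<le> j" for j
    proof -
      have "distr M borel (g j) = distr M lborel (g j)" by (rule distr_cong) auto
      also have "\<dots> = density lborel (\<lambda>x. ennreal (exponential_density 1 x))"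
        using gs that by (intro distributed_distr_eq_density) (simp add: gains_setup_def)
      finally show ?thesis .
    qed
    moreover have "?\<pi> j = 0 \<longleftrightarrow> j = 0" for j
      using k by (cases "j = k"; cases "j = Suc k") auto
    ultimately show "distr M borel (g (?\<pi> j)) = distr M borel (g j)" for j
      by (metis less_one not_le)
  qed
  moreover have "indep_set (sets (vimage_algebra (space M) (\<lambda>w j. d j w) ?D))
                           (sets (vimage_algebra (space M) (\<lambda>w j. g (?\<pi> j) w) ?P))"
    using indep_set_vimage_algebra_compose[OF ind G reindex] by simp
  ultimately show ?thesis
    using distr_pair_eq_pair_measure[OF D G ind] distr_pair_eq_pair_measure[OF D G'] by simp
qed

text \<open>A Poisson process a.s. has no point at the origin (mean count \<open>lam * 0\<close>), so all ordered
  distances are positive.\<close>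
lemma (in prob_space) ordered_hppp_AE_norm:
  assumes "ordered_hppp M lam d"
  shows "AE w in M. \<forall>j\<ge>1. 0 < norm (d j w) \<and> norm (d j w) < norm (d (Suc j) w)"
proof -
  have incr: "AE w in M. \<forall>j\<ge>1. norm (d j w) < norm (d (Suc j) w)"
    using assms unfolding ordered_hppp_def by (auto elim: eventually_mono)
  have "measure M {w \<in> space M. ppp_count d {0} w = 0} = 1"
    using assms unfolding ordered_hppp_def by (auto dest: spec[of _ "{0}"])
  then have "AE w in M. w \<in> {w \<in> space M. ppp_count d {0} w = 0}"
    by (rule AE_prob_1)
  then have no_origin: "AE w in M. ppp_count d {0} w = 0"
    by (rule eventually_mono) auto
  show ?thesis
    using incr no_origin
  proof eventually_elim
    case (elim w)
    have "strict_mono (\<lambda>i. norm (d (Suc i) w))"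
      using elim(1) by (auto simp: strict_mono_Suc_iff)
    then have inj: "inj (\<lambda>i. norm (d (Suc i) w))"
      by (rule strict_mono_imp_inj_on)
    have "d j w \<noteq> 0" if j: "1 \<le> j" for j
    proof
      assume "d j w = 0"
      with inj j have "{i. 1 \<le> i \<and> d i w \<in> {0}} = {j}"
        by (auto simp: inj_def) (metis Suc_pred' less_eq_Suc_le)
      then show False using elim(2) by (simp add: ppp_count_def)
    qed
    then show ?case using elim(1) by simp
  qed
qed

lemma (in prob_space) pcov_mf_Suc_le:
  assumes gs: "gains_setup M d g D" and D_neg: "\<And>x. x < 0 \<Longrightarrow> D x = 0"
    and pp: "ordered_hppp M lam d" and k: "1 \<le> k" and \<alpha>: "0 < \<alpha>"
  shows "pcov_mf M \<alpha> \<gamma> d g (Suc k) \<le> pcov_mf M \<alpha> \<gamma> d g k"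
proof -
  let ?\<pi> = "Transposition.transpose k (Suc k)"
  note [measurable] = gains_setup_measurable(1,2)[OF gs]
  have nonneg: "AE w in M. \<forall>j. 0 \<le> g j w"
    using gs D_neg by (rule gains_setup_AE_nonneg)
  have swapped: "(\<lambda>w. (\<lambda>j. d j w, \<lambda>j. g (?\<pi> j) w))
      \<in> measurable M (Pi\<^sub>M UNIV (\<lambda>_. borel) \<Otimes>\<^sub>M Pi\<^sub>M UNIV (\<lambda>_. borel))"
    by (intro measurable_Pair measurable_PiM_single') (auto dest: measurable_space)
  have "pcov_mf M \<alpha> \<gamma> d g (Suc k) = pcov_mf M \<alpha> \<gamma> d (\<lambda>j. g (?\<pi> j)) (Suc k)"
    using prob_Collect_eq_if_distr_eq[OF gains_setup_measurable(3)[OF gs] swapped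
        gains_setup_distr_transpose[OF gs k, symmetric] measurable_sir_seq_ge]
    by (simp add: pcov_mf_def sir_mf_eq_sir_seq)
  also have "\<dots> \<le> pcov_mf M \<alpha> \<gamma> d g k"
    unfolding pcov_mf_def
  proof (rule finite_measure_mono_AE)
    show "{w \<in> space M. \<gamma> \<le> sir_mf \<alpha> d g k w} \<in> sets M"
      unfolding sir_mf_def by measurable
    show "AE w in M. w \<in> {w \<in> space M. \<gamma> \<le> sir_mf \<alpha> d (\<lambda>j. g (?\<pi> j)) (Suc k) w}
        \<longrightarrow> w \<in> {w \<in> space M. \<gamma> \<le> sir_mf \<alpha> d g k w}"
      using nonneg ordered_hppp_AE_norm[OF pp]
    proof eventually_elim
      case (elim w)
      then have "sir_mf \<alpha> d (\<lambda>j. g (?\<pi> j)) (Suc k) w \<le> sir_mf \<alpha> d g k w"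
        unfolding sir_mf_eq_sir_seq using k by (intro sir_seq_transpose_le \<alpha>) auto
      then show ?case by auto
    qed
  qed
  finally show ?thesis .
qed

lemma (in prob_space) pcov_zf_Suc_le:
  assumes gs: "gains_setup M d g D" and D_neg: "\<And>x. x < 0 \<Longrightarrow> D x = 0"
    and pp: "ordered_hppp M lam d" and k: "1 \<le> k" and \<alpha>: "0 < \<alpha>"
  shows "pcov_zf M \<alpha> \<gamma> K d g (Suc k) \<le> pcov_zf M \<alpha> \<gamma> K d g k"
  unfolding pcov_zf_def
proof (rule finite_measure_mono_AE)
  note [measurable] = gains_setup_measurable(1,2)[OF gs]
  have nonneg: "AE w in M. \<forall>j. 0 \<le> g j w"
    using gs D_neg by (rule gains_setup_AE_nonneg)
  show "{w \<in> space M. \<gamma> \<le> sir_zf \<alpha> K d g k w} \<in> sets M"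
    unfolding sir_zf_def by measurable
  show "AE w in M. w \<in> {w \<in> space M. \<gamma> \<le> sir_zf \<alpha> K d g (Suc k) w}
      \<longrightarrow> w \<in> {w \<in> space M. \<gamma> \<le> sir_zf \<alpha> K d g k w}"
    using nonneg ordered_hppp_AE_norm[OF pp]
  proof eventually_elim
    case (elim w)
    then have "sir_zf \<alpha> K d g (Suc k) w \<le> sir_zf \<alpha> K d g k w"
      unfolding sir_zf_eq_sir_seq using k by (intro sir_seq_Suc_le \<alpha>) auto
    then show ?case by auto
  qed
qed

theorem mainTheorem8:
  fixes M :: "'w measure" and lam \<alpha> \<gamma> :: real and K L :: nat
    and d :: "nat \<Rightarrow> 'w \<Rightarrow> real^2" and gm gz :: "nat \<Rightarrow> 'w \<Rightarrow> real"
  assumes "prob_space M"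
    and "lam > 0" and "K \<ge> 2" and "\<alpha> > 2" and "\<gamma> > 0" and "L \<ge> 1"
    and "ordered_hppp M lam d"
    and "gains_setup M d gm (erlang_density (L - 1) 1)"
  shows "(\<forall>k. 1 \<le> k \<and> k \<le> K - 1 \<longrightarrow> pcov_mf M \<alpha> \<gamma> d gm k \<ge> pcov_mf M \<alpha> \<gamma> d gm (k + 1))
       \<and> (L \<ge> K \<and> gains_setup M d gz (erlang_density (L - K) 1) \<longrightarrow>
          (\<forall>k. 1 \<le> k \<and> k \<le> K - 1 \<longrightarrow> pcov_zf M \<alpha> \<gamma> K d gz k \<ge> pcov_zf M \<alpha> \<gamma> K d gz (k + 1)))"
proof -
  interpret prob_space M by fact
  have \<alpha>: "0 < \<alpha>" using \<open>\<alpha> > 2\<close> by simp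
  have erlang: "erlang_density n 1 x = 0" if "x < 0" for n x
    using that by (simp add: erlang_density_def)
  show ?thesis
    using pcov_mf_Suc_le[OF assms(8) erlang assms(7) _ \<alpha>]
      pcov_zf_Suc_le[OF _ erlang assms(7) _ \<alpha>] by auto
qed

end
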